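(* Let $N\ge2$ and $\alpha\in\mathbb{C}^N$. The set $\mathcal{M}_{N,\infty}$ is dense in $\mathbb{C}$ if and only if $\mathbb{Z}+\alpha_1\mathbb{Z}+\cdots+\alpha_N\mathbb{Z}$ is dense in $\mathbb{C}$.
   Context: For $(\tau,\xi)\in\mathbb{Z}\times\mathbb{Z}^N$ write $|(\tau,\xi)|=|\tau|+|\xi_1|+\cdots+|\xi_N|$ and, for $\lambda\in\mathbb{C}$, $\rho_\lambda(\tau,\xi)=\tau+\alpha_1\xi_1+\cdots+\alpha_N\xi_N-\lambda$. For $j\in\mathbb{N}$ let $\mathcal{M}_N(j)=\bigcup_{(\tau,\xi)\in\mathbb{Z}\times\mathbb{Z}^N,\ |(\tau,\xi)|>1}\{\lambda\in\mathbb{C}: |\rho_\lambda(\tau,\xi)|<|(\tau,\xi)|^{-j}\}$, and $\mathcal{M}_{N,\infty}=\bigcap_{j\in\mathbb{N}}\mathcal{M}_N(j)$. *)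

theory Defs
  imports "HOL-Analysis.Analysis"
begin

text \<open>Integer points (tau, xi) of Z x Z^N: xi is an integer function supported on {1..N}.\<close>
definition lattice_pts :: "nat \<Rightarrow> (int \<times> (nat \<Rightarrow> int)) set" where
  "lattice_pts N = {(t, xi). \<forall>i. i \<notin> {1..N} \<longrightarrow> xi i = 0}"

definition pt_norm :: "nat \<Rightarrow> int \<times> (nat \<Rightarrow> int) \<Rightarrow> int" where
  "pt_norm N p = \<bar>fst p\<bar> + (\<Sum>i=1..N. \<bar>snd p i\<bar>)"

definition rho :: "nat \<Rightarrow> (nat \<Rightarrow> complex) \<Rightarrow> complex \<Rightarrow> int \<times> (nat \<Rightarrow> int) \<Rightarrow> complex" where
  "rho N \<alpha> lam p = of_int (fst p) + (\<Sum>i=1..N. \<alpha> i * of_int (snd p i)) - lam"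

definition M_set :: "nat \<Rightarrow> (nat \<Rightarrow> complex) \<Rightarrow> nat \<Rightarrow> complex set" where
  "M_set N \<alpha> j = (\<Union>p\<in>{p \<in> lattice_pts N. pt_norm N p > 1}.
      {lam. norm (rho N \<alpha> lam p) < real_of_int (pt_norm N p) powr (- real j)})"

definition M_inf :: "nat \<Rightarrow> (nat \<Rightarrow> complex) \<Rightarrow> complex set" where
  "M_inf N \<alpha> = (\<Inter>j\<in>{1..}. M_set N \<alpha> j)"

definition lattice_grp :: "nat \<Rightarrow> (nat \<Rightarrow> complex) \<Rightarrow> complex set" where
  "lattice_grp N \<alpha> = {of_int t + (\<Sum>i=1..N. \<alpha> i * of_int (xi i)) | t xi. True}"

end

(* Every lam in M_set N alpha j lies within |(tau,xi)|^(-j) <= 2^(-j) of a point of the group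
   G = Z + alpha_1 Z + ... + alpha_N Z, so M_inf is contained in the closure of G.
   Conversely rho vanishes at lam = tau + alpha . xi, so every element of G except the finitely
   many values of points with |(tau,xi)| <= 1 lies in the open set M_set N alpha j.  Hence if G is
   dense, each M_set N alpha j is open and dense, and by Baire's theorem so is their countable
   intersection M_inf. *)
theory Submission
  imports Defs
begin

lemma dense_Diff_finite:
  fixes S F :: "'a::{perfect_space, t1_space} set"
  assumes "closure S = UNIV" "finite F"
  shows "closure (S - F) = UNIV"
proof -
  have "(S - F) \<inter> U \<noteq> {}" if "openin (top_of_set UNIV) U" "U \<noteq> {}" for U
  proof -
    obtain x where "x \<in> U" using \<open>U \<noteq> {}\<close> by blast
    with that(1) have "infinite U"
      using infinite_openin islimpt_UNIV by blast
    then have "U - F \<noteq> {}"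
      using assms(2) by (metis Diff_eq_empty_iff finite_subset)
    moreover have "open (U - F)"
      using that(1) assms(2) by (simp add: open_Diff finite_imp_closed)
    ultimately show ?thesis
      using open_Int_closure_eq_empty[of "U - F" S] assms(1) by blast
  qed
  then show ?thesis
    using closure_Int_ballI[of UNIV "S - F"] by blast
qed

lemma closure_eq_UNIV_mono:
  assumes "closure S = UNIV" "S \<subseteq> closure T"
  shows "closure T = UNIV"
proof -
  have "closure S \<subseteq> closure T"
    using assms(2) by (rule closure_minimal) simp
  then show ?thesis
    using assms(1) by auto
qed

definition lattice_val :: "nat \<Rightarrow> (nat \<Rightarrow> complex) \<Rightarrow> int \<times> (nat \<Rightarrow> int) \<Rightarrow> complex" where
  "lattice_val N \<alpha> p = of_int (fst p) + (\<Sum>i=1..N. \<alpha> i * of_int (snd p i))"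

lemma rho_eq_lattice_val: "rho N \<alpha> lam p = lattice_val N \<alpha> p - lam"
  by (simp add: rho_def lattice_val_def)

lemma lattice_grp_eq_image: "lattice_grp N \<alpha> = lattice_val N \<alpha> ` lattice_pts N"
proof
  show "lattice_val N \<alpha> ` lattice_pts N \<subseteq> lattice_grp N \<alpha>"
  proof (rule image_subsetI)
    fix p
    show "lattice_val N \<alpha> p \<in> lattice_grp N \<alpha>"
      unfolding lattice_val_def lattice_grp_def by blast
  qed
next
  show "lattice_grp N \<alpha> \<subseteq> lattice_val N \<alpha> ` lattice_pts N"
  proof
    fix g assume "g \<in> lattice_grp N \<alpha>"
    then obtain t xi where g: "g = of_int t + (\<Sum>i=1..N. \<alpha> i * of_int (xi i))"
      unfolding lattice_grp_def by blast
    let ?p = "(t, \<lambda>i. if i \<in> {1..N} then xi i else 0)"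
    have "?p \<in> lattice_pts N"
      by (simp add: lattice_pts_def)
    moreover have "lattice_val N \<alpha> ?p = g"
      by (simp add: g lattice_val_def)
    ultimately show "g \<in> lattice_val N \<alpha> ` lattice_pts N"
      by blast
  qed
qed

lemma finite_pt_norm_le: "finite {p \<in> lattice_pts N. pt_norm N p \<le> k}"
proof -
  let ?B = "{-k..k}"
  let ?extend = "\<lambda>(t::int, xi::nat \<Rightarrow> int). (t, \<lambda>i. if i \<in> {1..N} then xi i else 0)"
  have "{p \<in> lattice_pts N. pt_norm N p \<le> k} \<subseteq> ?extend ` (?B \<times> PiE {1..N} (\<lambda>_. ?B))"
  proof
    fix p assume p: "p \<in> {p \<in> lattice_pts N. pt_norm N p \<le> k}"
    obtain t xi where p_eq: "p = (t, xi)" by fastforce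
    have xi_outside: "xi i = 0" if "i \<notin> {1..N}" for i
      using p p_eq that by (simp add: lattice_pts_def)
    have le: "\<bar>t\<bar> + (\<Sum>i=1..N. \<bar>xi i\<bar>) \<le> k"
      using p p_eq by (simp add: pt_norm_def)
    have "\<bar>t\<bar> \<le> k"
      using le sum_nonneg[of "{1..N}" "\<lambda>i. \<bar>xi i\<bar>"] by linarith
    moreover have "xi i \<in> ?B" if "i \<in> {1..N}" for i
      using le member_le_sum[of i "{1..N}" "\<lambda>i. \<bar>xi i\<bar>"] that by auto
    ultimately have mem: "(t, restrict xi {1..N}) \<in> ?B \<times> PiE {1..N} (\<lambda>_. ?B)"
      by (auto simp: restrict_PiE_iff)
    have "?extend (t, restrict xi {1..N}) = p"
      using p_eq xi_outside by (auto simp: fun_eq_iff)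
    then show "p \<in> ?extend ` (?B \<times> PiE {1..N} (\<lambda>_. ?B))"
      using mem by (rule image_eqI[OF sym])
  qed
  moreover have "finite (?extend ` (?B \<times> PiE {1..N} (\<lambda>_. ?B)))"
    by (intro finite_imageI finite_cartesian_product finite_PiE) auto
  ultimately show ?thesis
    by (rule finite_subset)
qed

lemma M_set_near_lattice_grp:
  assumes "lam \<in> M_set N \<alpha> j"
  shows "\<exists>g\<in>lattice_grp N \<alpha>. dist g lam < (1/2) ^ j"
proof -
  obtain p where p: "p \<in> lattice_pts N" "pt_norm N p > 1"
    and close: "norm (lattice_val N \<alpha> p - lam) < real_of_int (pt_norm N p) powr (- real j)"
    using assms unfolding M_set_def rho_eq_lattice_val by blast
  have "real_of_int (pt_norm N p) powr (- real j) \<le> 2 powr (- real j)"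
    using p(2) by (intro powr_mono2') auto
  also have "\<dots> = (1/2) ^ j"
    by (simp add: powr_minus_divide powr_realpow power_one_over)
  finally have "dist (lattice_val N \<alpha> p) lam < (1/2) ^ j"
    using close by (simp add: dist_norm)
  moreover have "lattice_val N \<alpha> p \<in> lattice_grp N \<alpha>"
    using p(1) by (simp add: lattice_grp_eq_image)
  ultimately show ?thesis
    by blast
qed

lemma M_inf_subset_closure_lattice_grp: "M_inf N \<alpha> \<subseteq> closure (lattice_grp N \<alpha>)"
proof
  fix lam assume lam: "lam \<in> M_inf N \<alpha>"
  show "lam \<in> closure (lattice_grp N \<alpha>)"
    unfolding closure_approachable
  proof (intro allI impI)
    fix e :: real assume "e > 0"
    then obtain n where n: "(1/2) ^ n < e"
      using real_arch_pow_inv[of e "1/2"] by auto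
    have "lam \<in> M_set N \<alpha> (Suc n)"
      using lam unfolding M_inf_def by auto
    then obtain g where g: "g \<in> lattice_grp N \<alpha>" "dist g lam < (1/2) ^ Suc n"
      using M_set_near_lattice_grp by blast
    have "(1/2::real) ^ Suc n \<le> (1/2) ^ n"
      by (simp add: power_decreasing)
    then have "dist g lam < e"
      using g(2) n by linarith
    then show "\<exists>g\<in>lattice_grp N \<alpha>. dist g lam < e"
      using g(1) by blast
  qed
qed

lemma open_M_set: "open (M_set N \<alpha> j)"
  unfolding M_set_def rho_def
  by (intro open_UN ballI open_Collect_less continuous_intros)

lemma lattice_val_in_M_set:
  assumes "p \<in> lattice_pts N" "pt_norm N p > 1"
  shows "lattice_val N \<alpha> p \<in> M_set N \<alpha> j"
  unfolding M_set_def rho_eq_lattice_val by (rule UN_I[of p]) (use assms in auto)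

lemma dense_M_set:
  assumes "closure (lattice_grp N \<alpha>) = UNIV"
  shows "closure (M_set N \<alpha> j) = UNIV"
proof -
  let ?small = "lattice_val N \<alpha> ` {p \<in> lattice_pts N. pt_norm N p \<le> 1}"
  have "lattice_grp N \<alpha> - ?small \<subseteq> M_set N \<alpha> j"
    unfolding lattice_grp_eq_image using lattice_val_in_M_set by force
  moreover have "closure (lattice_grp N \<alpha> - ?small) = UNIV"
    using assms finite_pt_norm_le by (intro dense_Diff_finite) auto
  ultimately show ?thesis
    by (meson closure_eq_UNIV_mono closure_subset order.trans)
qed

lemma dense_M_inf:
  assumes "closure (lattice_grp N \<alpha>) = UNIV"
  shows "closure (M_inf N \<alpha>) = UNIV"
proof -
  have "UNIV \<subseteq> closure (\<Inter>(M_set N \<alpha> ` {1..}))"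
    by (rule Baire) (auto simp: open_M_set dense_M_set[OF assms])
  then show ?thesis
    unfolding M_inf_def by auto
qed

theorem lemma2:
  fixes N :: nat and \<alpha> :: "nat \<Rightarrow> complex"
  assumes "N \<ge> 2"
  shows "closure (M_inf N \<alpha>) = UNIV \<longleftrightarrow> closure (lattice_grp N \<alpha>) = UNIV"
proof
  assume "closure (M_inf N \<alpha>) = UNIV"
  then show "closure (lattice_grp N \<alpha>) = UNIV"
    using M_inf_subset_closure_lattice_grp by (rule closure_eq_UNIV_mono)
next
  assume "closure (lattice_grp N \<alpha>) = UNIV"
  then show "closure (M_inf N \<alpha>) = UNIV"
    by (rule dense_M_inf)
qed

end
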